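(* Let $G$ be a graph with maximum degree at most $\Delta_{\max}$, let $t\in\mathbb{N}$, let $\eta\geq 0$, and let $c:E(G)\to[t]$ be a (not necessarily proper) edge-colouring such that for every edge $uv\in E(G)$ and every $i\in[t]$, $$s_{c(uv)}(u)+s_{c(uv)}(v)\leq \eta+s_i(u)+s_i(v).$$ If $uv\in E(G)$ satisfies $s_{c(uv)}(u)+s_{c(uv)}(v)=D$, then there exists a colour $\kappa\in[t]$ such that $s_\kappa(u)\geq D-\eta$.
   Context: For a vertex $v$ and colour $i\in[t]$, $d_i(v)$ is the number of edges of colour $i$ incident to $v$, and $s_i(v)=\max\{d_i(v)-\frac{\Delta_{\max}}{t},0\}$. *)

theory Defs
  imports Main Complex_Main
begin

definition simple_graph :: "'a set set \<Rightarrow> bool" where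
  "simple_graph E \<longleftrightarrow> finite E \<and> (\<forall>e\<in>E. card e = 2)"

definition degree :: "'a set set \<Rightarrow> 'a \<Rightarrow> nat" where
  "degree E v = card {e\<in>E. v \<in> e}"

definition col_deg :: "'a set set \<Rightarrow> ('a set \<Rightarrow> nat) \<Rightarrow> nat \<Rightarrow> 'a \<Rightarrow> nat" where
  "col_deg E c i v = card {e\<in>E. v \<in> e \<and> c e = i}"

definition surplus :: "'a set set \<Rightarrow> ('a set \<Rightarrow> nat) \<Rightarrow> nat \<Rightarrow> nat \<Rightarrow> nat \<Rightarrow> 'a \<Rightarrow> real" where
  "surplus E c Delta t i v = max (real (col_deg E c i v) - real Delta / real t) 0"

end

theory Submission
  imports Defs
begin

text \<open>Since the colour degrees of v add up to at most its degree, some colour i is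
used at v at most \<Delta>/t times, so s_i(v) = 0. Applying the hypothesis to the edge uv
and this colour i gives D \<le> \<eta> + s_i(u), so \<kappa> = i works.\<close>

lemma sum_col_deg_le_degree:
  assumes "finite E" "finite I"
  shows "(\<Sum>i\<in>I. col_deg E c i v) \<le> degree E v"
proof -
  have "(\<Sum>i\<in>I. col_deg E c i v) = card (\<Union>i\<in>I. {e\<in>E. v \<in> e \<and> c e = i})"
    unfolding col_deg_def
    by (rule card_UN_disjoint[symmetric]) (use assms in auto)
  also have "\<dots> \<le> card {e\<in>E. v \<in> e}"
    by (rule card_mono) (use assms in auto)
  finally show ?thesis
    unfolding degree_def .
qed

lemma ex_col_deg_le_average:
  assumes "finite E" "finite I" "I \<noteq> {}" "degree E v \<le> Delta"
  shows "\<exists>i\<in>I. real (col_deg E c i v) \<le> real Delta / real (card I)"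
proof (rule ccontr)
  assume "\<not> ?thesis"
  then have "(\<Sum>i\<in>I. real Delta / real (card I)) < (\<Sum>i\<in>I. real (col_deg E c i v))"
    using assms(2,3) by (intro sum_strict_mono) auto
  also have "\<dots> \<le> real Delta"
    using le_trans[OF sum_col_deg_le_degree[OF assms(1,2)] assms(4)]
    by (simp flip: of_nat_sum)
  finally show False
    using assms(2,3) by simp
qed

lemma ex_colour_surplus_eq_0:
  assumes "finite E" "degree E v \<le> Delta" "t \<ge> 1"
  shows "\<exists>i\<in>{1..t}. surplus E c Delta t i v = 0"
proof -
  obtain i where "i \<in> {1..t}" "real (col_deg E c i v) \<le> real Delta / real t"
    using ex_col_deg_le_average[of E "{1..t}" v Delta c] assms by auto
  moreover from this(2) have "surplus E c Delta t i v = 0"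
    unfolding surplus_def by simp
  ultimately show ?thesis
    by blast
qed

theorem lemma4p3:
  fixes E :: "'a set set" and c :: "'a set \<Rightarrow> nat" and Delta t :: nat
    and eta D :: real and u v :: 'a
  assumes "simple_graph E"
    and "\<forall>x. degree E x \<le> Delta"
    and "eta \<ge> 0"
    and "\<forall>e\<in>E. c e \<in> {1..t}"
    and "\<forall>x y i. {x, y} \<in> E \<and> i \<in> {1..t} \<longrightarrow>
          surplus E c Delta t (c {x, y}) x + surplus E c Delta t (c {x, y}) y
            \<le> eta + surplus E c Delta t i x + surplus E c Delta t i y"
    and "{u, v} \<in> E"
    and "surplus E c Delta t (c {u, v}) u + surplus E c Delta t (c {u, v}) v = D"
  shows "\<exists>\<kappa>\<in>{1..t}. surplus E c Delta t \<kappa> u \<ge> D - eta"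
proof -
  have "finite E"
    using assms(1) unfolding simple_graph_def by simp
  moreover have "t \<ge> 1"
    using assms(4,6) by fastforce
  ultimately obtain i where i: "i \<in> {1..t}" "surplus E c Delta t i v = 0"
    using ex_colour_surplus_eq_0 assms(2) by meson
  have "D \<le> eta + surplus E c Delta t i u + surplus E c Delta t i v"
    using assms(5)[rule_format, OF conjI[OF assms(6) i(1)]] assms(7) by simp
  with i show ?thesis
    by force
qed

end
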